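(* Fix $\alpha\in(0,1]$ and let $X$ be as in the context. For every $\varepsilon>0$ there exists a constant $c=c(\varepsilon)$ such that for all $\beta\in(1,1+\alpha)$ and all $x>0$, $$\mathbf{P}\Big\{\inf_{0\leq t\leq1}X(t)\leq x\;\Big|\;X(0)=(1+\varepsilon)x\Big\}\leq1\wedge\frac{c}{x^{\beta-1}}.$$
   Context: $X$ is the continuous-state branching process of index $1+\alpha$: a $[0,\infty)$-valued time-homogeneous Markov process with càdlàg paths and $\mathbf{E}\{e^{-\lambda X(t)}\mid X(0)=x\}=\exp[-x(t+\lambda^{-\alpha})^{-1/\alpha}]$ for $\lambda,t,x\geq0$. *)

theory Defs
  imports "HOL-Probability.Probability"
begin

text \<open>Laplace exponent of the (1+alpha)-stable CSBP:
  u_t(lambda) = (t + lambda^(-alpha))^(-1/alpha), for lambda > 0.\<close>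
definition csbp_u :: "real \<Rightarrow> real \<Rightarrow> real \<Rightarrow> real" where
  "csbp_u \<alpha> t lam = (t + lam powr (-\<alpha>)) powr (-1/\<alpha>)"

definition nat_filtration :: "'a measure \<Rightarrow> (real \<Rightarrow> 'a \<Rightarrow> real) \<Rightarrow> real \<Rightarrow> 'a set set" where
  "nat_filtration M X s =
     sigma_sets (space M) (\<Union>r\<in>{0..s}. {X r -` B \<inter> space M | B. B \<in> sets borel})"

text \<open>A family of laws P y (y \<ge> 0 the starting point) on a common measurable space M,
  together with a process X, forms the continuous-state branching process of index 1+alpha:
  X is [0,\<infinity>)-valued with cadlag paths, X(0) = y almost surely under P y, and X is a
  time-homogeneous Markov process (w.r.t. its natural filtration) with
  E[exp(-\<lambda> X(s+t)) | F_s] = exp(- X(s) u_t(\<lambda>)).\<close>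
definition is_csbp :: "real \<Rightarrow> 'a measure \<Rightarrow> (real \<Rightarrow> 'a measure) \<Rightarrow> (real \<Rightarrow> 'a \<Rightarrow> real) \<Rightarrow> bool" where
  "is_csbp \<alpha> M P X \<longleftrightarrow>
     (\<forall>t\<ge>0. X t \<in> borel_measurable M) \<and>
     (\<forall>t\<ge>0. \<forall>\<omega>\<in>space M. X t \<omega> \<ge> 0) \<and>
     (\<forall>\<omega>\<in>space M. \<forall>t\<ge>0. ((\<lambda>s. X s \<omega>) \<longlongrightarrow> X t \<omega>) (at_right t)) \<and>
     (\<forall>\<omega>\<in>space M. \<forall>t>0. \<exists>l. ((\<lambda>s. X s \<omega>) \<longlongrightarrow> l) (at_left t)) \<and>
     (\<forall>y\<ge>0. prob_space (P y) \<and> sets (P y) = sets M \<and>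
        (AE \<omega> in P y. X 0 \<omega> = y) \<and>
        (\<forall>s\<ge>0. \<forall>t\<ge>0. \<forall>lam>0. \<forall>A\<in>nat_filtration M X s.
           (LINT \<omega>:A|P y. exp (- lam * X (s + t) \<omega>)) =
           (LINT \<omega>:A|P y. exp (- X s \<omega> * csbp_u \<alpha> t lam))))"

end

theory Submission
  imports Defs "HOL-Real_Asymp.Real_Asymp"
begin

text \<open>Put \<open>y = (1 + \<epsilon>) x\<close> and \<open>a = (1 + \<epsilon>/2) x\<close>. Since \<open>u\<^sub>t(\<lambda>) \<le> \<lambda>\<close>, the Markov property
  gives \<open>E\<^sub>y[exp (-\<lambda> X(h)); A] \<ge> exp (-a\<lambda>) P\<^sub>y(A)\<close> for every \<open>A \<in> F\<^sub>s\<close> on which \<open>X(s) \<le> a\<close>.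
  Splitting the event that \<open>X\<close> drops below \<open>a\<close> somewhere on a finite grid \<open>T \<subseteq> [0,1]\<close>
  according to the first such grid point and summing gives the Chernoff-type bound
  \<open>P\<^sub>y{\<exists>t\<in>T. X(t) < a} \<le> exp (a\<lambda>) E\<^sub>y exp (-\<lambda> X(1)) = exp (a\<lambda> - y u\<^sub>1(\<lambda>))\<close>;
  by right-continuity it extends from dyadic grids to all of \<open>[0,1]\<close>. As \<open>u\<^sub>1(\<lambda>)/\<lambda> \<rightarrow> 1\<close>
  for \<open>\<lambda> \<rightarrow> 0\<close>, some \<open>\<lambda>\<close> makes \<open>\<kappa> = (1 + \<epsilon>) u\<^sub>1(\<lambda>) - (1 + \<epsilon>/2) \<lambda>\<close> positive, and then
  \<open>exp (-\<kappa> x) \<le> max 1 (1/\<kappa>) / x\<^bsup>\<beta>-1\<^esup>\<close>.\<close>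

lemma
  assumes "is_csbp \<alpha> M P X"
  shows is_csbp_measurable: "0 \<le> t \<Longrightarrow> X t \<in> borel_measurable M"
    and is_csbp_nonneg: "0 \<le> t \<Longrightarrow> \<omega> \<in> space M \<Longrightarrow> 0 \<le> X t \<omega>"
    and is_csbp_right_continuous:
      "\<omega> \<in> space M \<Longrightarrow> 0 \<le> t \<Longrightarrow> ((\<lambda>s. X s \<omega>) \<longlongrightarrow> X t \<omega>) (at_right t)"
    and is_csbp_prob_space: "0 \<le> y \<Longrightarrow> prob_space (P y)"
    and is_csbp_sets: "0 \<le> y \<Longrightarrow> sets (P y) = sets M"
    and is_csbp_start: "0 \<le> y \<Longrightarrow> AE \<omega> in P y. X 0 \<omega> = y"
    and is_csbp_markov:
      "0 \<le> y \<Longrightarrow> 0 \<le> s \<Longrightarrow> 0 \<le> t \<Longrightarrow> 0 < lam \<Longrightarrow> A \<in> nat_filtration M X s \<Longrightarrow>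
        (LINT \<omega>:A|P y. exp (- lam * X (s + t) \<omega>)) = (LINT \<omega>:A|P y. exp (- X s \<omega> * csbp_u \<alpha> t lam))"
  using assms unfolding is_csbp_def by auto

lemma sigma_algebra_nat_filtration: "sigma_algebra (space M) (nat_filtration M X s)"
  unfolding nat_filtration_def by (rule sigma_algebra_sigma_sets) auto

lemma vimage_in_nat_filtration:
  assumes "r \<in> {0..s}" "B \<in> sets borel"
  shows "X r -` B \<inter> space M \<in> nat_filtration M X s"
  unfolding nat_filtration_def using assms by (intro sigma_sets.Basic) blast

lemma nat_filtration_subset_sets:
  assumes "\<And>r. r \<in> {0..s} \<Longrightarrow> X r \<in> borel_measurable M"
  shows "nat_filtration M X s \<subseteq> sets M"
  unfolding nat_filtration_def using assms by (intro sets.sigma_sets_subset) auto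

lemma first_entrance_in_nat_filtration:
  assumes "finite T" "T \<subseteq> {0..s}" "0 \<le> s"
  shows "{\<omega>\<in>space M. X s \<omega> < a \<and> (\<forall>r\<in>T. a \<le> X r \<omega>)} \<in> nat_filtration M X s"
proof -
  interpret F: sigma_algebra "space M" "nat_filtration M X s"
    by (rule sigma_algebra_nat_filtration)
  have "{\<omega>\<in>space M. X r \<omega> \<in> B} \<in> nat_filtration M X s" if "r \<in> {0..s}" "B \<in> sets borel" for r B
    using vimage_in_nat_filtration[OF that, of X M] by (simp add: vimage_def Int_def conj_commute)
  from this[of s "{..<a}"] this[of _ "{a..}"] show ?thesis
    using assms by (intro F.sets_Collect_conj F.sets_Collect_finite_All) auto
qed

lemma csbp_u_nonneg: "0 \<le> csbp_u \<alpha> t lam"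
  unfolding csbp_u_def by simp

lemma csbp_u_le:
  assumes "0 < \<alpha>" "0 \<le> t" "0 < lam"
  shows "csbp_u \<alpha> t lam \<le> lam"
proof -
  have "(t + lam powr (-\<alpha>)) powr (-1/\<alpha>) \<le> (lam powr (-\<alpha>)) powr (-1/\<alpha>)"
    using assms by (intro powr_mono2') auto
  also have "\<dots> = lam"
    using assms by (simp add: powr_powr)
  finally show ?thesis
    unfolding csbp_u_def .
qed

lemma exists_csbp_u_gt:
  assumes "0 < \<alpha>" "0 < t" "r < 1"
  shows "\<exists>lam>0. r * lam < csbp_u \<alpha> t lam"
proof -
  have "((\<lambda>lam. csbp_u \<alpha> t lam / lam) \<longlongrightarrow> 1) (at_right 0)"
    using assms unfolding csbp_u_def by real_asymp
  then have "eventually (\<lambda>lam. r < csbp_u \<alpha> t lam / lam) (at_right 0)"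
    using assms(3) by (rule order_tendstoD(1))
  then have "eventually (\<lambda>lam. 0 < lam \<and> r < csbp_u \<alpha> t lam / lam) (at_right 0)"
    using eventually_at_right_less by (rule eventually_conj[rotated])
  then obtain lam where "0 < lam" "r < csbp_u \<alpha> t lam / lam"
    using eventually_happens'[OF trivial_limit_at_right_real] by blast
  then show ?thesis
    by (auto simp: less_divide_eq)
qed

lemma csbp_integrable_exp:
  assumes "is_csbp \<alpha> M P X" "0 \<le> y" "0 \<le> t" "0 \<le> c"
  shows "integrable (P y) (\<lambda>\<omega>. exp (- c * X t \<omega>))"
proof -
  interpret prob_space "P y"
    using assms(1,2) by (rule is_csbp_prob_space)
  note [measurable_cong] = is_csbp_sets[OF assms(1,2)]
  note [measurable] = is_csbp_measurable[OF assms(1,3)]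
  have "AE \<omega> in P y. norm (exp (- c * X t \<omega>)) \<le> 1"
    using is_csbp_nonneg[OF assms(1,3)] assms(4) is_csbp_sets[OF assms(1,2)]
    by (intro AE_I2) (auto dest: sets_eq_imp_space_eq)
  then show ?thesis
    by (rule integrable_const_bound) measurable
qed

lemma csbp_laplace:
  assumes csbp: "is_csbp \<alpha> M P X" and "0 \<le> y" "0 \<le> t" "0 < lam"
  shows "(\<integral>\<omega>. exp (- lam * X t \<omega>) \<partial>P y) = exp (- y * csbp_u \<alpha> t lam)"
proof -
  interpret prob_space "P y"
    using csbp assms(2) by (rule is_csbp_prob_space)
  have space_eq: "space (P y) = space M"
    using is_csbp_sets[OF csbp assms(2)] by (rule sets_eq_imp_space_eq)
  have "space M \<in> nat_filtration M X 0"
    unfolding nat_filtration_def by (rule sigma_sets_top)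
  then have "(\<integral>\<omega>. exp (- lam * X t \<omega>) \<partial>P y) = (LINT \<omega>:space M|P y. exp (- X 0 \<omega> * csbp_u \<alpha> t lam))"
    using is_csbp_markov[OF csbp assms(2) order_refl assms(3,4)]
      set_integral_space[OF csbp_integrable_exp[OF csbp assms(2,3)], of lam] assms space_eq
    by simp
  also have "\<dots> = (\<integral>\<omega>. exp (- y * csbp_u \<alpha> t lam) \<partial>P y)"
    unfolding set_lebesgue_integral_def
  proof (rule integral_cong_AE)
    note [measurable_cong] = is_csbp_sets[OF csbp assms(2)]
    note [measurable] = is_csbp_measurable[OF csbp order_refl]
    show "(\<lambda>\<omega>. indicator (space M) \<omega> *\<^sub>R exp (- X 0 \<omega> * csbp_u \<alpha> t lam)) \<in> borel_measurable (P y)"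
      by measurable
    show "AE \<omega> in P y. indicator (space M) \<omega> *\<^sub>R exp (- X 0 \<omega> * csbp_u \<alpha> t lam) = exp (- y * csbp_u \<alpha> t lam)"
      using is_csbp_start[OF csbp assms(2)] by (rule AE_mp, intro AE_I2) (simp add: space_eq)
  qed simp
  finally show ?thesis
    by (simp add: prob_space)
qed

definition dyadic_grid :: "nat \<Rightarrow> real set" where
  "dyadic_grid n = (\<lambda>k. real k / 2 ^ n) ` {..2 ^ n}"

lemma finite_dyadic_grid: "finite (dyadic_grid n)"
  unfolding dyadic_grid_def by simp

lemma dyadic_grid_subset: "dyadic_grid n \<subseteq> {0..1}"
  unfolding dyadic_grid_def by (auto simp: divide_le_eq_1)

lemma dyadic_grid_mono: "dyadic_grid n \<subseteq> dyadic_grid (Suc n)"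
proof
  fix d assume "d \<in> dyadic_grid n"
  then obtain k where "k \<le> 2 ^ n" "d = real k / 2 ^ n"
    unfolding dyadic_grid_def by auto
  then have "2 * k \<le> 2 ^ Suc n" "d = real (2 * k) / 2 ^ Suc n"
    by simp_all
  then show "d \<in> dyadic_grid (Suc n)"
    unfolding dyadic_grid_def by blast
qed

lemma one_in_dyadic_grid: "1 \<in> dyadic_grid n"
  unfolding dyadic_grid_def by (rule image_eqI[of _ _ "2 ^ n"]) auto

lemma dyadic_grid_between:
  assumes "0 \<le> t" "t < b" "b \<le> 1"
  shows "\<exists>n. \<exists>d\<in>dyadic_grid n. t < d \<and> d < b"
proof -
  obtain n where n: "(1/2) ^ n < b - t"
    using real_arch_pow_inv[of "b - t" "1/2"] assms by auto
  define k where "k = nat \<lfloor>t * 2 ^ n\<rfloor> + 1"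
  have k: "real k = of_int \<lfloor>t * 2 ^ n\<rfloor> + 1"
    unfolding k_def using assms by simp
  have "t * 2 ^ n < real k" "real k \<le> t * 2 ^ n + 1"
    unfolding k by linarith+
  then have t_less: "t < real k / 2 ^ n" and "real k / 2 ^ n \<le> t + (1/2) ^ n"
    by (simp_all add: field_simps)
  with n have less_b: "real k / 2 ^ n < b"
    by linarith
  then have "real k / 2 ^ n < 1"
    using assms(3) by linarith
  then have "k \<le> 2 ^ n"
    by (simp add: divide_less_eq_1)
  then show ?thesis
    using t_less less_b unfolding dyadic_grid_def by blast
qed

lemma right_continuous_less_at_dyadic:
  fixes f :: "real \<Rightarrow> real"
  assumes cont: "\<And>t. t \<in> {0..<1} \<Longrightarrow> (f \<longlongrightarrow> f t) (at_right t)"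
    and "t \<in> {0..1}" "f t < a"
  shows "\<exists>n. \<exists>d\<in>dyadic_grid n. f d < a"
proof (cases "t = 1")
  case True
  then show ?thesis
    using assms(3) one_in_dyadic_grid by blast
next
  case False
  with assms(2) have t: "0 \<le> t" "t < 1"
    by auto
  have "eventually (\<lambda>s. f s < a) (at_right t)"
    using cont[of t] t assms(3) by (intro order_tendstoD(2)) auto
  then obtain b where "t < b" and b: "\<And>s. t < s \<Longrightarrow> s < b \<Longrightarrow> f s < a"
    unfolding eventually_at_right_field by blast
  then obtain n d where "d \<in> dyadic_grid n" "t < d" "d < min b 1"
    using dyadic_grid_between[of t "min b 1"] t by auto
  then show ?thesis
    using b by auto
qed

lemma ex_less_iff_ex_first_less:
  fixes g :: "'b::linorder \<Rightarrow> 'c::linorder"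
  assumes "finite T"
  shows "(\<exists>t\<in>T. g t < a) \<longleftrightarrow> (\<exists>t\<in>T. g t < a \<and> (\<forall>r\<in>T. r < t \<longrightarrow> a \<le> g r))"
proof
  assume "\<exists>t\<in>T. g t < a"
  then have fin: "finite {t\<in>T. g t < a}" and hits: "{t\<in>T. g t < a} \<noteq> {}"
    using assms by auto
  define t\<^sub>0 where "t\<^sub>0 = Min {t\<in>T. g t < a}"
  have "t\<^sub>0 \<in> T" "g t\<^sub>0 < a"
    using Min_in[OF fin hits] unfolding t\<^sub>0_def by auto
  moreover have "a \<le> g r" if "r \<in> T" "r < t\<^sub>0" for r
    using Min_le[OF fin, of r] that unfolding t\<^sub>0_def by (auto simp: not_less[symmetric])
  ultimately show "\<exists>t\<in>T. g t < a \<and> (\<forall>r\<in>T. r < t \<longrightarrow> a \<le> g r)"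
    by blast
qed blast

lemma sum_set_integral_le_integral:
  fixes f :: "'a \<Rightarrow> real"
  assumes "finite I" "disjoint_family_on A I" "\<And>i. i \<in> I \<Longrightarrow> A i \<in> sets M"
    and f: "integrable M f" "\<And>x. x \<in> space M \<Longrightarrow> 0 \<le> f x"
  shows "(\<Sum>i\<in>I. LINT x:A i|M. f x) \<le> integral\<^sup>L M f"
proof -
  have "(\<Sum>i\<in>I. LINT x:A i|M. f x) = (LINT x:(\<Union>i\<in>I. A i)|M. f x)"
  proof (rule set_integral_finite_UN_AE[symmetric])
    show "AE x in M. x \<in> A i \<and> x \<in> A j \<longrightarrow> i = j" if "i \<in> I" "j \<in> I" for i j
      using assms(2) that by (intro AE_I2) (auto simp: disjoint_family_on_def)
    show "set_integrable M (A i) f" if "i \<in> I" for i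
      unfolding set_integrable_def using assms(3)[OF that] f(1) by (rule integrable_mult_indicator)
  qed (use assms in auto)
  also have "\<dots> \<le> integral\<^sup>L M f"
    unfolding set_lebesgue_integral_def using assms
    by (intro integral_mono integrable_mult_indicator sets.finite_UN) (auto split: split_indicator)
  finally show ?thesis .
qed

lemma csbp_set_integral_exp_ge:
  assumes csbp: "is_csbp \<alpha> M P X" and "0 < \<alpha>" "0 \<le> y" "0 < lam" "0 \<le> s" "s \<le> h"
    and A: "A \<in> nat_filtration M X s" and below: "\<And>\<omega>. \<omega> \<in> A \<Longrightarrow> X s \<omega> \<le> a"
  shows "exp (- a * lam) * measure (P y) A \<le> (LINT \<omega>:A|P y. exp (- lam * X h \<omega>))"
proof -
  interpret prob_space "P y"
    using csbp assms(3) by (rule is_csbp_prob_space)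
  have "A \<in> sets M"
    using A nat_filtration_subset_sets[of s X M] is_csbp_measurable[OF csbp] by auto
  then have A_sets: "A \<in> sets (P y)" and A_space: "A \<subseteq> space M"
    using is_csbp_sets[OF csbp assms(3)] sets.sets_into_space by auto
  define u where "u = csbp_u \<alpha> (h - s) lam"
  have u: "0 \<le> u" "u \<le> lam"
    unfolding u_def using csbp_u_nonneg csbp_u_le assms(2,4,6) by auto
  have "exp (- a * lam) * measure (P y) A = (LINT \<omega>:A|P y. exp (- a * lam))"
    using A_sets by (simp add: set_integral_const emeasure_eq_measure)
  also have "\<dots> \<le> (LINT \<omega>:A|P y. exp (- X s \<omega> * u))"
  proof (rule set_integral_mono)
    show "set_integrable (P y) A (\<lambda>\<omega>. exp (- a * lam))"
      unfolding set_integrable_def using A_sets by (intro integrable_mult_indicator) auto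
    show "set_integrable (P y) A (\<lambda>\<omega>. exp (- X s \<omega> * u))"
      unfolding set_integrable_def using A_sets csbp_integrable_exp[OF csbp assms(3,5) u(1)]
      by (intro integrable_mult_indicator) (auto simp: mult.commute)
    fix \<omega> assume "\<omega> \<in> A"
    then have "0 \<le> X s \<omega>" "X s \<omega> \<le> a"
      using A_space is_csbp_nonneg[OF csbp assms(5)] below by auto
    then have "X s \<omega> * u \<le> a * lam"
      using u by (intro mult_mono) auto
    then show "exp (- a * lam) \<le> exp (- X s \<omega> * u)"
      by simp
  qed
  also have "\<dots> = (LINT \<omega>:A|P y. exp (- lam * X h \<omega>))"
    using is_csbp_markov[OF csbp assms(3,5) _ assms(4) A, of "h - s"] assms(6)
    unfolding u_def by simp
  finally show ?thesis .
qed

lemma csbp_hit_below_finite: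
  assumes csbp: "is_csbp \<alpha> M P X" and "0 < \<alpha>" "0 \<le> y" "0 < lam" and h: "0 \<le> h"
    and T: "finite T" "T \<subseteq> {0..h}"
  shows "measure (P y) {\<omega>\<in>space M. \<exists>t\<in>T. X t \<omega> < a} \<le> exp (a * lam - y * csbp_u \<alpha> h lam)"
proof -
  interpret prob_space "P y"
    using csbp assms(3) by (rule is_csbp_prob_space)
  define A where "A t = {\<omega>\<in>space M. X t \<omega> < a \<and> (\<forall>r\<in>{r\<in>T. r < t}. a \<le> X r \<omega>)}" for t
  have A_filt: "A t \<in> nat_filtration M X t" if "t \<in> T" for t
    unfolding A_def using T that by (intro first_entrance_in_nat_filtration) auto
  have A_sets: "A t \<in> sets (P y)" if "t \<in> T" for t
    using A_filt[OF that] nat_filtration_subset_sets[of t X M] is_csbp_measurable[OF csbp]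
      is_csbp_sets[OF csbp assms(3)] T that by auto
  have disj: "disjoint_family_on A T"
    unfolding disjoint_family_on_def A_def by (auto simp: linorder_neq_iff)
  have hit_eq: "{\<omega>\<in>space M. \<exists>t\<in>T. X t \<omega> < a} = (\<Union>t\<in>T. A t)"
  proof (rule set_eqI)
    fix \<omega>
    show "\<omega> \<in> {\<omega>\<in>space M. \<exists>t\<in>T. X t \<omega> < a} \<longleftrightarrow> \<omega> \<in> (\<Union>t\<in>T. A t)"
      using ex_less_iff_ex_first_less[OF T(1), of "\<lambda>t. X t \<omega>" a] unfolding A_def by auto
  qed
  have "exp (- a * lam) * measure (P y) {\<omega>\<in>space M. \<exists>t\<in>T. X t \<omega> < a}
      = (\<Sum>t\<in>T. exp (- a * lam) * measure (P y) (A t))"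
    unfolding hit_eq sum_distrib_left[symmetric] using T(1) A_sets disj
    by (subst finite_measure_finite_Union) auto
  also have "\<dots> \<le> (\<Sum>t\<in>T. LINT \<omega>:A t|P y. exp (- lam * X h \<omega>))"
  proof (rule sum_mono)
    fix t assume "t \<in> T"
    then show "exp (- a * lam) * measure (P y) (A t) \<le> (LINT \<omega>:A t|P y. exp (- lam * X h \<omega>))"
      using T by (intro csbp_set_integral_exp_ge[OF csbp assms(2-4) _ _ A_filt]) (auto simp: A_def)
  qed
  also have "\<dots> \<le> (\<integral>\<omega>. exp (- lam * X h \<omega>) \<partial>P y)"
    using T(1) disj A_sets csbp_integrable_exp[OF csbp assms(3) h, of lam] assms(4)
    by (intro sum_set_integral_le_integral) auto
  also have "\<dots> = exp (- y * csbp_u \<alpha> h lam)"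
    using csbp_laplace[OF csbp assms(3) h assms(4)] .
  finally show ?thesis
    by (simp add: exp_minus exp_diff divide_simps mult.commute)
qed

lemma csbp_hit_below_eq_dyadic:
  assumes csbp: "is_csbp \<alpha> M P X"
  shows "{\<omega>\<in>space M. \<exists>t\<in>{0..1}. X t \<omega> < a} = (\<Union>n. {\<omega>\<in>space M. \<exists>t\<in>dyadic_grid n. X t \<omega> < a})"
proof (intro equalityI subsetI)
  fix \<omega> assume "\<omega> \<in> {\<omega>\<in>space M. \<exists>t\<in>{0..1}. X t \<omega> < a}"
  then show "\<omega> \<in> (\<Union>n. {\<omega>\<in>space M. \<exists>t\<in>dyadic_grid n. X t \<omega> < a})"
    using right_continuous_less_at_dyadic[of "\<lambda>t. X t \<omega>"] is_csbp_right_continuous[OF csbp]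
    by auto
qed (use dyadic_grid_subset in blast)

lemma csbp_hit_below_finite_in_sets:
  assumes csbp: "is_csbp \<alpha> M P X" and T: "finite T" "T \<subseteq> {0..h}"
  shows "{\<omega>\<in>space M. \<exists>t\<in>T. X t \<omega> < a} \<in> sets M"
proof (intro sets.sets_Collect_finite_Ex T(1))
  fix t assume "t \<in> T"
  then have "0 \<le> t"
    using T(2) by auto
  note [measurable] = is_csbp_measurable[OF csbp this]
  show "{\<omega>\<in>space M. X t \<omega> < a} \<in> sets M"
    by measurable
qed

lemma csbp_hit_below_in_sets:
  assumes csbp: "is_csbp \<alpha> M P X"
  shows "{\<omega>\<in>space M. \<exists>t\<in>{0..1}. X t \<omega> < a} \<in> sets M"
  unfolding csbp_hit_below_eq_dyadic[OF csbp]
  using csbp_hit_below_finite_in_sets[OF csbp finite_dyadic_grid dyadic_grid_subset]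
  by (intro sets.countable_nat_UN) auto

lemma csbp_hit_below:
  assumes csbp: "is_csbp \<alpha> M P X" and "0 < \<alpha>" "0 \<le> y" "0 < lam"
  shows "measure (P y) {\<omega>\<in>space M. \<exists>t\<in>{0..1}. X t \<omega> < a} \<le> exp (a * lam - y * csbp_u \<alpha> 1 lam)"
proof -
  interpret prob_space "P y"
    using csbp assms(3) by (rule is_csbp_prob_space)
  define B where "B n = {\<omega>\<in>space M. \<exists>t\<in>dyadic_grid n. X t \<omega> < a}" for n
  have "range B \<subseteq> sets (P y)"
    unfolding B_def is_csbp_sets[OF csbp assms(3)]
    using csbp_hit_below_finite_in_sets[OF csbp finite_dyadic_grid dyadic_grid_subset] by auto
  moreover have "incseq B"
    unfolding B_def using dyadic_grid_mono by (intro incseq_SucI) blast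
  ultimately have "(\<lambda>n. measure (P y) (B n)) \<longlonglongrightarrow> measure (P y) (\<Union>n. B n)"
    by (rule finite_Lim_measure_incseq)
  then have "measure (P y) (\<Union>n. B n) \<le> exp (a * lam - y * csbp_u \<alpha> 1 lam)"
    unfolding B_def using finite_dyadic_grid dyadic_grid_subset
    by (intro LIMSEQ_le_const2) (auto intro!: csbp_hit_below_finite[OF csbp assms(2-4) zero_le_one])
  then show ?thesis
    unfolding csbp_hit_below_eq_dyadic[OF csbp] B_def .
qed

lemma csbp_inf_below:
  assumes csbp: "is_csbp \<alpha> M P X" and "0 < \<alpha>" "0 \<le> y" "0 < lam" "x < a"
  shows "measure (P y) {\<omega>\<in>space M. (INF t\<in>{0..1}. X t \<omega>) \<le> x} \<le> exp (a * lam - y * csbp_u \<alpha> 1 lam)"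
proof -
  interpret prob_space "P y"
    using csbp assms(3) by (rule is_csbp_prob_space)
  have "{\<omega>\<in>space M. (INF t\<in>{0..1}. X t \<omega>) \<le> x} \<subseteq> {\<omega>\<in>space M. \<exists>t\<in>{0..1}. X t \<omega> < a}"
  proof safe
    fix \<omega> assume "\<omega> \<in> space M" "(INF t\<in>{0..1}. X t \<omega>) \<le> x"
    moreover have "bdd_below ((\<lambda>t. X t \<omega>) ` {0..1})"
      using is_csbp_nonneg[OF csbp _ \<open>\<omega> \<in> space M\<close>] by (intro bdd_belowI2[of _ 0]) auto
    ultimately show "\<exists>t\<in>{0..1}. X t \<omega> < a"
      using \<open>x < a\<close> by (subst cINF_less_iff[symmetric]) auto
  qed
  then have "measure (P y) {\<omega>\<in>space M. (INF t\<in>{0..1}. X t \<omega>) \<le> x}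
      \<le> measure (P y) {\<omega>\<in>space M. \<exists>t\<in>{0..1}. X t \<omega> < a}"
    using csbp_hit_below_in_sets[OF csbp] is_csbp_sets[OF csbp assms(3)]
    by (intro finite_measure_mono) auto
  also have "\<dots> \<le> exp (a * lam - y * csbp_u \<alpha> 1 lam)"
    by (rule csbp_hit_below[OF csbp assms(2-4)])
  finally show ?thesis .
qed

lemma exp_neg_le_div_powr:
  fixes \<kappa> x \<gamma> :: real
  assumes "0 < \<kappa>" "0 < x" "0 \<le> \<gamma>" "\<gamma> \<le> 1"
  shows "exp (- \<kappa> * x) \<le> max 1 (1 / \<kappa>) / x powr \<gamma>"
proof (cases "x \<le> 1")
  case True
  then have "x powr \<gamma> \<le> 1"
    using assms by (simp add: powr_le1)
  then have "1 \<le> max 1 (1 / \<kappa>) / x powr \<gamma>"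
    using assms by (simp add: le_divide_eq)
  moreover have "exp (- \<kappa> * x) \<le> 1"
    using assms by simp
  ultimately show ?thesis
    by linarith
next
  case False
  then have "x powr \<gamma> \<le> x"
    using assms powr_mono[of \<gamma> 1 x] by simp
  have "\<kappa> * x \<le> exp (\<kappa> * x)"
    using exp_ge_add_one_self[of "\<kappa> * x"] by linarith
  then have "exp (- \<kappa> * x) \<le> (1 / \<kappa>) / x"
    using assms by (simp add: exp_minus field_simps)
  also have "\<dots> \<le> max 1 (1 / \<kappa>) / x powr \<gamma>"
    using assms \<open>x powr \<gamma> \<le> x\<close> by (intro frac_le) auto
  finally show ?thesis .
qed

theorem lemma15:
  fixes \<alpha> :: real and M :: "'a measure" and P :: "real \<Rightarrow> 'a measure"
    and X :: "real \<Rightarrow> 'a \<Rightarrow> real"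
  assumes "0 < \<alpha>" and "\<alpha> \<le> 1"
    and "is_csbp \<alpha> M P X"
  shows "\<forall>\<epsilon>>0. \<exists>c::real. \<forall>\<beta>\<in>{1<..<1+\<alpha>}. \<forall>x>0.
           measure (P ((1 + \<epsilon>) * x)) {\<omega>\<in>space M. (INF t\<in>{0..1}. X t \<omega>) \<le> x}
             \<le> min 1 (c / x powr (\<beta> - 1))"
proof (intro allI impI)
  fix \<epsilon> :: real assume "0 < \<epsilon>"
  have "(1 + \<epsilon>/2) / (1 + \<epsilon>) < 1"
    using \<open>0 < \<epsilon>\<close> by simp
  then obtain lam where lam: "0 < lam" and gain: "(1 + \<epsilon>/2) / (1 + \<epsilon>) * lam < csbp_u \<alpha> 1 lam"
    using exists_csbp_u_gt[OF assms(1) zero_less_one] by blast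
  define \<kappa> where "\<kappa> = (1 + \<epsilon>) * csbp_u \<alpha> 1 lam - (1 + \<epsilon>/2) * lam"
  have "0 < \<kappa>"
    using gain \<open>0 < \<epsilon>\<close> by (simp add: \<kappa>_def field_simps)
  show "\<exists>c. \<forall>\<beta>\<in>{1<..<1+\<alpha>}. \<forall>x>0.
      measure (P ((1 + \<epsilon>) * x)) {\<omega>\<in>space M. (INF t\<in>{0..1}. X t \<omega>) \<le> x} \<le> min 1 (c / x powr (\<beta> - 1))"
  proof (intro exI[of _ "max 1 (1 / \<kappa>)"] ballI allI impI)
    fix \<beta> x :: real assume \<beta>: "\<beta> \<in> {1<..<1+\<alpha>}" and "0 < x"
    then have y: "0 \<le> (1 + \<epsilon>) * x"
      using \<open>0 < \<epsilon>\<close> by simp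
    have "measure (P ((1 + \<epsilon>) * x)) {\<omega>\<in>space M. (INF t\<in>{0..1}. X t \<omega>) \<le> x}
        \<le> exp ((1 + \<epsilon>/2) * x * lam - (1 + \<epsilon>) * x * csbp_u \<alpha> 1 lam)"
      using \<open>0 < \<epsilon>\<close> \<open>0 < x\<close> by (intro csbp_inf_below[OF assms(3,1) y lam]) simp
    also have "\<dots> = exp (- \<kappa> * x)"
      by (simp add: \<kappa>_def algebra_simps)
    also have "\<dots> \<le> max 1 (1 / \<kappa>) / x powr (\<beta> - 1)"
      using \<beta> assms(2) \<open>0 < \<kappa>\<close> \<open>0 < x\<close> by (intro exp_neg_le_div_powr) auto
    finally show "measure (P ((1 + \<epsilon>) * x)) {\<omega>\<in>space M. (INF t\<in>{0..1}. X t \<omega>) \<le> x}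
        \<le> min 1 (max 1 (1 / \<kappa>) / x powr (\<beta> - 1))"
      using prob_space.prob_le_1[OF is_csbp_prob_space[OF assms(3) y]] by simp
  qed
qed

end
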